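(* Let $d\ge 2$ and let $a=(a_1,\dots,a_d)\in\mathcal{UN}_d$. Then there exists a special symmetric Toeplitz matrix $T_{\alpha,\beta}$ (of size $d\times d$) which is a matrix associated to the sequence $a$. The constant $\alpha$ is uniquely determined. For $d=2$ there are two choices for $\beta$, namely $\beta$ or $-\beta$. If $d\ge3$, then $\beta$ is uniquely determined.
   Context: A polynomial in $\mathbb{R}[z]$ is hyperbolic if all its roots are real. A sequence $a\in\mathbb{R}^d$ is a Nuij sequence if for every hyperbolic $p\in\mathbb{R}[z]$ of degree $d$, $p_a(z,s):=p(z)+\sum_{k=1}^d a_k s^k p^{(k)}(z)$ is hyperbolic for all $s\in\mathbb{R}$. A Nuij sequence $a$ admits a universal determinantal representation if there exists a real symmetric $d\times d$ matrix $A_a$ such that for every monic hyperbolic polynomial $p(z)=(z+\lambda_1)\cdots(z+\lambda_d)$ of degree $d$ one has $p_a(z,s)=\det(zI+D+sA_a)$, where $D$ is the diagonal matrix with diagonal entries $\lambda_1,\dots,\lambda_d$ written in an arbitrary order (so $\det(zI+D)=p(z)$); such $A_a$ is called a matrix associated to $a$. $\mathcal{UN}_d$ is the set of Nuij sequences in $\mathbb{R}^d$ admitting a universal determinantal representation. For $\alpha,\beta\in\mathbb{R}$, the special symmetric Toeplitz matrix $T_{\alpha,\beta}$ is the matrix with all diagonal entries equal to $\alpha$ and all off-diagonal entries equal to $\beta$. *)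

theory Defs
  imports "HOL-Analysis.Analysis" "HOL-Computational_Algebra.Polynomial"
begin

definition hyperbolic :: "real poly \<Rightarrow> bool" where
  "hyperbolic p \<longleftrightarrow> (\<forall>z::complex. poly (map_poly complex_of_real p) z = 0 \<longrightarrow> z \<in> \<real>)"

definition nuij_poly :: "nat \<Rightarrow> (nat \<Rightarrow> real) \<Rightarrow> real poly \<Rightarrow> real \<Rightarrow> real poly" where
  "nuij_poly d a p s = p + (\<Sum>k=1..d. smult (a k * s ^ k) ((pderiv ^^ k) p))"

definition nuij_seq :: "nat \<Rightarrow> (nat \<Rightarrow> real) \<Rightarrow> bool" where
  "nuij_seq d a \<longleftrightarrow>
     (\<forall>p. hyperbolic p \<and> degree p = d \<longrightarrow> (\<forall>s. hyperbolic (nuij_poly d a p s)))"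

definition diag_mat :: "('n::finite \<Rightarrow> real) \<Rightarrow> real^'n^'n" where
  "diag_mat l = (\<chi> i j. if i = j then l i else 0)"

text \<open>A is a matrix associated to a (d = CARD('n)): real symmetric and
  p_a(z,s) = det(zI + D + sA) for every monic hyperbolic p = prod (z + lambda_i),
  with D = diag(lambda) in any order (all orderings covered by quantifying over all lambda).\<close>
definition associated_matrix :: "(nat \<Rightarrow> real) \<Rightarrow> real^'n^'n \<Rightarrow> bool" where
  "associated_matrix a A \<longleftrightarrow> transpose A = A \<and>
     (\<forall>(l::'n \<Rightarrow> real) z s.
        poly (nuij_poly CARD('n) a (\<Prod>i\<in>UNIV. [:l i, 1:]) s) z
          = det (mat z + diag_mat l + s *\<^sub>R A))"

definition in_UN :: "'n::finite itself \<Rightarrow> (nat \<Rightarrow> real) \<Rightarrow> bool" where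
  "in_UN _ a \<longleftrightarrow> nuij_seq CARD('n) a \<and> (\<exists>A::real^'n^'n. associated_matrix a A)"

definition toeplitz_special :: "real \<Rightarrow> real \<Rightarrow> real^'n^'n" where
  "toeplitz_special \<alpha> \<beta> = (\<chi> i j. if i = j then \<alpha> else \<beta>)"

end

theory Submission
  imports Defs
begin

text \<open>Setting \<open>z = 0\<close>, \<open>s = 1\<close> in the defining identity shows that the polynomial
  \<open>det (D + A)\<close> in the diagonal entries of \<open>D\<close> depends only on \<open>a\<close>; expanding it row by row,
  it determines every principal minor of \<open>A\<close>.  The identity is symmetric in the \<open>\<lambda>\<^sub>i\<close> and
  invariant under conjugation by diagonal sign matrices, so relabelled and sign-conjugated
  associated matrices are again associated.  Hence the principal minors of order 1, 2 and 3 of an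
  associated matrix are invariant under permutations of the indices: the diagonal is a constant
  \<open>\<alpha>\<close>, the squares of the off-diagonal entries are a constant \<open>\<beta>\<^sup>2\<close>, and the cyclic products
  \<open>A\<^sub>i\<^sub>j A\<^sub>j\<^sub>k A\<^sub>k\<^sub>i\<close> are a constant, which must be \<open>\<beta>\<^sup>3\<close>.  Normalising the signs of one row
  then turns \<open>A\<close> into \<open>T\<^sub>\<alpha>\<^sub>,\<^sub>\<beta>\<close>.  Conversely the minors \<open>\<alpha>\<close>, \<open>\<alpha>\<^sup>2 - \<beta>\<^sup>2\<close> and
  \<open>\<alpha>\<^sup>3 - 3\<alpha>\<beta>\<^sup>2 + 2\<beta>\<^sup>3\<close> of \<open>T\<^sub>\<alpha>\<^sub>,\<^sub>\<beta>\<close> determine \<open>\<alpha>\<close>, \<open>\<beta>\<^sup>2\<close> and, if \<open>d \<ge> 3\<close>, \<open>\<beta>\<close>;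
  for \<open>d = 2\<close> conjugation by \<open>diag(1, -1)\<close> exchanges \<open>\<beta>\<close> and \<open>-\<beta>\<close>.\<close>

lemma permutes_map_distinct:
  fixes xs ys :: "'a list"
  assumes "distinct xs" "distinct ys" "length xs = length ys"
  shows "\<exists>p. p permutes (UNIV::'a set) \<and> map p xs = ys"
  using assms
proof (induction xs arbitrary: ys)
  case Nil
  then show ?case by (auto intro: permutes_id)
next
  case (Cons x xs)
  then obtain y ys' where ys: "ys = y # ys'" by (cases ys) auto
  with Cons obtain q where q: "q permutes (UNIV::'a set)" "map q xs = ys'" by auto
  have "q x \<notin> set ys'" "y \<notin> set ys'"
    using Cons.prems ys q by (auto simp: permutes_inj inj_eq)
  then have "map (Transposition.transpose (q x) y) ys' = ys'"
    by (intro map_idI transpose_apply_other) auto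
  then have "map (Transposition.transpose (q x) y \<circ> q) xs = ys'"
    using q by (simp flip: map_map)
  moreover have "Transposition.transpose (q x) y \<circ> q permutes (UNIV::'a set)"
    by (rule permutes_compose[OF q(1)]) (simp add: permutes_swap_id)
  ultimately show ?case using ys by (auto intro!: exI[of _ "Transposition.transpose (q x) y \<circ> q"])
qed

lemma exists_distinct_list:
  assumes "n \<le> CARD('a::finite)"
  shows "\<exists>xs :: 'a list. distinct xs \<and> length xs = n"
proof -
  obtain T :: "'a set" where T: "card T = n"
    using obtain_subset_with_card_n[OF assms] by blast
  obtain xs where xs: "set xs = T" "distinct xs"
    using finite_distinct_list[OF finite] by blast
  show ?thesis
    using distinct_card[OF xs(2)] xs T by (intro exI[of _ xs]) simp
qed

lemma obtain_distinct_pair: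
  assumes "2 \<le> CARD('a)"
  obtains i j :: "'a::finite" where "i \<noteq> j"
  using exists_distinct_list[OF assms] by (auto simp: length_Suc_conv numeral_2_eq_2)

lemma obtain_distinct_triple:
  assumes "3 \<le> CARD('a)"
  obtains i j k :: "'a::finite" where "distinct [i, j, k]"
  using exists_distinct_list[OF assms] by (auto simp: length_Suc_conv numeral_3_eq_3)

section \<open>Principal minors\<close>

definition principal_minor :: "real^'n^'n \<Rightarrow> 'n::finite set \<Rightarrow> real" where
  "principal_minor A T = (\<Sum>p | p permutes T. of_int (sign p) * (\<Prod>i\<in>T. A$i$p i))"

lemma principal_minor_cong:
  assumes "\<And>i j. i \<in> T \<Longrightarrow> j \<in> T \<Longrightarrow> A$i$j = B$i$j"
  shows "principal_minor A T = principal_minor B T"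
  unfolding principal_minor_def
  by (intro sum.cong refl arg_cong2[where f="(*)"] prod.cong) (auto simp: assms permutes_in_image)

lemma det_eq_principal_minor:
  fixes M :: "real^'n::finite^'n"
  assumes "\<And>i j. i \<notin> T \<Longrightarrow> M$i$j = (if i = j then 1 else 0)"
  shows "det M = principal_minor M T"
proof -
  have vanish: "of_int (sign p) * (\<Prod>i\<in>UNIV. M$i$p i) = 0"
    if p: "p permutes (UNIV::'n set)" and not_T: "\<not> p permutes T" for p
  proof -
    obtain k where "k \<notin> T" "p k \<noteq> k"
      using p not_T unfolding permutes_def by blast
    then have "M$k$p k = 0" using assms by simp
    then show ?thesis by (metis UNIV_I finite prod_zero mult_zero_right)
  qed
  have restrict: "(\<Prod>i\<in>UNIV. M$i$p i) = (\<Prod>i\<in>T. M$i$p i)" if "p permutes T" for p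
  proof -
    have "(\<Prod>i\<in>UNIV - T. M$i$p i) = 1"
      using that assms by (simp add: permutes_not_in)
    then show ?thesis
      using prod.subset_diff[of T UNIV "\<lambda>i. M$i$p i"] by simp
  qed
  have "det M = (\<Sum>p | p permutes (UNIV::'n set). of_int (sign p) * (\<Prod>i\<in>UNIV. M$i$p i))"
    by (simp add: det_def)
  also have "\<dots> = (\<Sum>p | p permutes T. of_int (sign p) * (\<Prod>i\<in>UNIV. M$i$p i))"
    by (rule sum.mono_neutral_right) (auto intro: permutes_subset simp: vanish)
  also have "\<dots> = principal_minor M T"
    unfolding principal_minor_def by (simp add: restrict)
  finally show ?thesis .
qed

lemma principal_minor_singleton: "principal_minor A {i} = A$i$i"
  unfolding principal_minor_def
  using sum_over_permutations_insert[of "{}" i "\<lambda>p. of_int (sign p) * (\<Prod>x\<in>{i}. A$x$p x)"]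
  by simp

lemma principal_minor_pair:
  assumes "i \<noteq> j"
  shows "principal_minor A {i,j} = A$i$i * A$j$j - A$i$j * A$j$i"
proof -
  have "sum g {p. p permutes {j}} = g id" for g :: "_ \<Rightarrow> real"
    using sum_over_permutations_insert[of "{}" j] by simp
  then show ?thesis
    using assms unfolding principal_minor_def
    by (simp add: sum_over_permutations_insert sign_compose permutation_swap_id sign_swap_id
        Transposition.transpose_def algebra_simps)
qed

lemma principal_minor_triple:
  assumes "i \<noteq> j" "i \<noteq> k" "j \<noteq> k"
  shows "principal_minor A {i,j,k} =
     A$i$i * A$j$j * A$k$k - A$i$i * A$j$k * A$k$j - A$i$j * A$j$i * A$k$k
      + A$i$j * A$j$k * A$k$i + A$i$k * A$j$i * A$k$j - A$i$k * A$j$j * A$k$i"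
proof -
  have "sum g {p. p permutes {k}} = g id" for g :: "_ \<Rightarrow> real"
    using sum_over_permutations_insert[of "{}" k] by simp
  moreover have "sign (Transposition.transpose u v \<circ> q) = sign (Transposition.transpose u v) * sign q"
    if "q permutes {j,k}" for u v q
    by (metis finite.emptyI finite_insert permutes_imp_permutation permutation_swap_id sign_compose that)
  ultimately show ?thesis
    using assms unfolding principal_minor_def
    by (simp add: sum_over_permutations_insert sign_compose permutation_swap_id sign_swap_id
        Transposition.transpose_def algebra_simps)
qed

definition unit_rows :: "'n::finite set \<Rightarrow> real^'n^'n \<Rightarrow> real^'n^'n" where
  "unit_rows R M = (\<chi> i j. if i \<in> R then (if i = j then 1 else 0) else M$i$j)"

lemma unit_rows_empty [simp]: "unit_rows {} M = M"
  by (simp add: unit_rows_def vec_eq_iff)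

text \<open>The determinant is affine in each diagonal entry; the difference of its values at 1 and 0
  is the determinant with that row replaced by a unit row.\<close>
lemma det_unit_rows_insert:
  assumes "i \<notin> R"
  shows "det (unit_rows (insert i R) (diag_mat l + A)) =
    det (unit_rows R (diag_mat (l(i := 1)) + A)) - det (unit_rows R (diag_mat (l(i := 0)) + A))"
proof -
  define r where "r = (\<lambda>j. row j (unit_rows R (diag_mat l + A)))"
  define e where "e = (\<chi> j. if j = i then 1 else (0::real))"
  have "unit_rows R (diag_mat (l(i := 1)) + A) = (\<chi> j. if j = i then e + row i A else r j)"
    and "unit_rows R (diag_mat (l(i := 0)) + A) = (\<chi> j. if j = i then row i A else r j)"
    and "unit_rows (insert i R) (diag_mat l + A) = (\<chi> j. if j = i then e else r j)"
    using assms by (auto simp: unit_rows_def diag_mat_def vec_eq_iff r_def e_def row_def)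
  then show ?thesis by (simp add: det_row_add)
qed

lemma det_unit_rows_eq:
  assumes "\<And>l. det (diag_mat l + A) = det (diag_mat l + B)"
  shows "det (unit_rows R (diag_mat l + A)) = det (unit_rows R (diag_mat l + B))"
proof -
  have "finite R" by simp
  then show ?thesis
  proof (induction R arbitrary: l rule: finite_induct)
    case empty
    then show ?case using assms by simp
  next
    case (insert i R)
    then show ?case by (simp only: det_unit_rows_insert[OF insert.hyps(2)] insert.IH)
  qed
qed

lemma principal_minor_eq_if_det_diag_eq:
  fixes A B :: "real^'n::finite^'n"
  assumes "\<And>l. det (diag_mat l + A) = det (diag_mat l + B)"
  shows "principal_minor A T = principal_minor B T"
proof -
  have "principal_minor M T = det (unit_rows (- T) (diag_mat (\<lambda>_. 0) + M))" for M :: "real^'n^'n"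
    by (subst det_eq_principal_minor[where T = T])
      (auto simp: unit_rows_def diag_mat_def intro: principal_minor_cong)
  then show ?thesis using det_unit_rows_eq[OF assms] by simp
qed

section \<open>Associated matrices\<close>

lemma associated_matrix_symmetric: "associated_matrix a A \<Longrightarrow> A$j$i = A$i$j"
  unfolding associated_matrix_def by (metis transpose_def vec_lambda_beta)

lemma associated_matrix_det_diag:
  fixes A :: "real^'n::finite^'n"
  assumes "associated_matrix a A"
  shows "det (diag_mat l + A) = poly (nuij_poly CARD('n) a (\<Prod>i\<in>UNIV. [:l i, 1:]) 1) 0"
proof -
  have "diag_mat l + A = mat 0 + diag_mat l + 1 *\<^sub>R A"
    by (simp add: vec_eq_iff mat_def)
  then show ?thesis using assms unfolding associated_matrix_def by metis
qed

lemma associated_matrix_principal_minor_eq: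
  assumes "associated_matrix a A" "associated_matrix a B"
  shows "principal_minor A T = principal_minor B T"
  by (rule principal_minor_eq_if_det_diag_eq)
    (simp add: associated_matrix_det_diag[OF assms(1)] associated_matrix_det_diag[OF assms(2)])

lemma det_permute_rows_columns:
  fixes A :: "real^'n::finite^'n"
  assumes "p permutes (UNIV::'n set)"
  shows "det (\<chi> i j. A$p i$p j) = det A"
proof -
  have "det (\<chi> i j. A$p i$p j) = of_int (sign p) * (of_int (sign p) * det A)"
    using det_permute_columns[OF assms, of "\<chi> i. A$p i"] det_permute_rows[OF assms, of A] by simp
  also have "\<dots> = det A"
    by (simp flip: mult.assoc of_int_mult)
  finally show ?thesis .
qed

text \<open>The characteristic identity only sees the multiset of the \<open>\<lambda>\<^sub>i\<close>, so relabelling the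
  indices of an associated matrix gives another one.\<close>
lemma associated_matrix_permute:
  fixes A :: "real^'n::finite^'n"
  assumes A: "associated_matrix a A" and p: "p permutes (UNIV::'n set)"
  shows "associated_matrix a (\<chi> i j. A$p i$p j)"
  unfolding associated_matrix_def
proof (intro conjI allI)
  show "transpose (\<chi> i j. A$p i$p j) = (\<chi> i j. A$p i$p j)"
    using associated_matrix_symmetric[OF A] by (simp add: transpose_def vec_eq_iff)
next
  fix l :: "'n \<Rightarrow> real" and z s
  let ?M = "mat z + diag_mat (l \<circ> inv p) + s *\<^sub>R A"
  have "mat z + diag_mat l + s *\<^sub>R (\<chi> i j. A$p i$p j) = (\<chi> i j. ?M$p i$p j)"
    using permutes_inj[OF p] by (auto simp: vec_eq_iff mat_def diag_mat_def permutes_inverses(2)[OF p] inj_eq)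
  then have "det (mat z + diag_mat l + s *\<^sub>R (\<chi> i j. A$p i$p j)) = det ?M"
    by (simp only: det_permute_rows_columns[OF p])
  also have "\<dots> = poly (nuij_poly CARD('n) a (\<Prod>i\<in>UNIV. [:l (inv p i), 1:]) s) z"
    using A unfolding associated_matrix_def by (simp add: comp_def)
  also have "(\<Prod>i\<in>UNIV. [:l (inv p i), 1:]) = (\<Prod>i\<in>UNIV. [:l i, 1:])"
    using prod.permute[OF permutes_inv[OF p], of "\<lambda>i. [:l i, 1:]"] by (simp add: comp_def)
  finally show "poly (nuij_poly CARD('n) a (\<Prod>i\<in>UNIV. [:l i, 1:]) s) z =
      det (mat z + diag_mat l + s *\<^sub>R (\<chi> i j. A$p i$p j))" ..
qed

lemma diag_mat_mult_left: "(diag_mat t ** M)$i$j = t i * M$i$j"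
  by (simp add: matrix_matrix_mult_def diag_mat_def if_distrib[where f="\<lambda>x. x * _"] cong: if_cong)

lemma diag_mat_mult_right: "(M ** diag_mat t)$i$j = M$i$j * t j"
  by (simp add: matrix_matrix_mult_def diag_mat_def if_distrib[where f="\<lambda>x. _ * x"] cong: if_cong)

lemma associated_matrix_sign_conj:
  fixes A :: "real^'n::finite^'n"
  assumes A: "associated_matrix a A" and t: "\<And>i. t i * t i = 1"
  shows "associated_matrix a (\<chi> i j. t i * t j * A$i$j)"
  unfolding associated_matrix_def
proof (intro conjI allI)
  show "transpose (\<chi> i j. t i * t j * A$i$j) = (\<chi> i j. t i * t j * A$i$j)"
    using associated_matrix_symmetric[OF A] by (simp add: transpose_def vec_eq_iff mult.commute)
next
  fix l :: "'n \<Rightarrow> real" and z s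
  let ?S = "diag_mat t :: real^'n^'n" and ?M = "mat z + diag_mat l + s *\<^sub>R A"
  have det_S: "det ?S * det ?S = 1"
    using t by (simp add: det_diagonal diag_mat_def flip: prod.distrib)
  have "(?S ** ?M ** ?S)$i$j = t i * t j * ?M$i$j" for i j
    by (simp add: diag_mat_mult_left diag_mat_mult_right)
  then have "mat z + diag_mat l + s *\<^sub>R (\<chi> i j. t i * t j * A$i$j) = ?S ** ?M ** ?S"
    using t by (auto simp: vec_eq_iff mat_def diag_mat_def algebra_simps)
  then have "det (mat z + diag_mat l + s *\<^sub>R (\<chi> i j. t i * t j * A$i$j)) = det ?M"
    using det_S by (simp add: det_mul)
  also have "\<dots> = poly (nuij_poly CARD('n) a (\<Prod>i\<in>UNIV. [:l i, 1:]) s) z"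
    using A unfolding associated_matrix_def by simp
  finally show "poly (nuij_poly CARD('n) a (\<Prod>i\<in>UNIV. [:l i, 1:]) s) z =
      det (mat z + diag_mat l + s *\<^sub>R (\<chi> i j. t i * t j * A$i$j))" ..
qed

lemma associated_matrix_principal_minor_permute:
  fixes A :: "real^'n::finite^'n"
  assumes "associated_matrix a A" "p permutes (UNIV::'n set)"
  shows "principal_minor (\<chi> i j. A$p i$p j) T = principal_minor A T"
  using associated_matrix_principal_minor_eq[OF associated_matrix_permute[OF assms] assms(1)] .

lemma associated_matrix_diag_eq:
  assumes "associated_matrix a A"
  shows "A$i$i = A$j$j"
proof -
  obtain p where "p permutes UNIV" "map p [i] = [j]"
    using permutes_map_distinct[of "[i]" "[j]"] by auto
  then show ?thesis
    using associated_matrix_principal_minor_permute[OF assms, of p "{i}"]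
    by (simp add: principal_minor_singleton)
qed

lemma associated_matrix_principal_minor_pair:
  assumes A: "associated_matrix a A" and "i \<noteq> j"
  shows "principal_minor A {i, j} = (A$k$k)\<^sup>2 - (A$i$j)\<^sup>2"
  using assms associated_matrix_diag_eq[OF A, of i k] associated_matrix_diag_eq[OF A, of j k]
  by (simp add: principal_minor_pair associated_matrix_symmetric[OF A, of j i] power2_eq_square)

lemma associated_matrix_offdiag_square_eq:
  assumes A: "associated_matrix a A" and "i \<noteq> j" "k \<noteq> l"
  shows "(A$i$j)\<^sup>2 = (A$k$l)\<^sup>2"
proof -
  obtain p where p: "p permutes UNIV" "map p [i, j] = [k, l]"
    using permutes_map_distinct[of "[i, j]" "[k, l]"] assms by auto
  have "principal_minor (\<chi> x y. A$p x$p y) {i, j} = principal_minor A {i, j}"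
    using associated_matrix_principal_minor_permute[OF A p(1)] .
  then show ?thesis
    using associated_matrix_principal_minor_pair[OF associated_matrix_permute[OF A p(1)], of i j k]
      associated_matrix_principal_minor_pair[OF A, of i j "p k"] assms p(2)
    by simp
qed

lemma associated_matrix_principal_minor_triple:
  assumes A: "associated_matrix a A" and ijk: "distinct [i, j, k]"
  shows "principal_minor A {i, j, k} =
    (A$i$i)^3 - 3 * A$i$i * (A$i$j)\<^sup>2 + 2 * (A$i$j * A$j$k * A$k$i)"
proof -
  have "A$j$j = A$i$i" "A$k$k = A$i$i"
    by (rule associated_matrix_diag_eq[OF A])+
  moreover have "A$k$j = A$j$k" "A$j$i = A$i$j" "A$i$k = A$k$i"
    by (rule associated_matrix_symmetric[OF A])+
  ultimately have "principal_minor A {i, j, k} = (A$i$i)^3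
      - A$i$i * ((A$j$k)\<^sup>2 + (A$i$j)\<^sup>2 + (A$k$i)\<^sup>2) + 2 * (A$i$j * A$j$k * A$k$i)"
    using ijk by (simp add: principal_minor_triple power2_eq_square power3_eq_cube algebra_simps)
  moreover have "(A$j$k)\<^sup>2 = (A$i$j)\<^sup>2" "(A$k$i)\<^sup>2 = (A$i$j)\<^sup>2"
    using ijk by (auto intro: associated_matrix_offdiag_square_eq[OF A])
  ultimately show ?thesis by simp
qed

lemma associated_matrix_triangle_eq:
  assumes A: "associated_matrix a A" and "distinct [i, j, k]" "distinct [i', j', k']"
  shows "A$i$j * A$j$k * A$k$i = A$i'$j' * A$j'$k' * A$k'$i'"
proof -
  obtain p where p: "p permutes UNIV" "p i = i'" "p j = j'" "p k = k'"
    using permutes_map_distinct[of "[i, j, k]" "[i', j', k']"] assms by auto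
  have "principal_minor (\<chi> x y. A$p x$p y) {i, j, k} = principal_minor A {i, j, k}"
    using associated_matrix_principal_minor_permute[OF A p(1)] .
  moreover have "A$i'$i' = A$i$i" using associated_matrix_diag_eq[OF A] .
  moreover have "(A$i'$j')\<^sup>2 = (A$i$j)\<^sup>2"
    using assms by (auto intro: associated_matrix_offdiag_square_eq[OF A])
  moreover note associated_matrix_principal_minor_triple[OF associated_matrix_permute[OF A p(1)] assms(2)]
      associated_matrix_principal_minor_triple[OF A assms(2)]
  ultimately show ?thesis
    using p by simp
qed

section \<open>Special symmetric Toeplitz matrices\<close>

lemma toeplitz_special_nth [simp]:
  "(toeplitz_special \<alpha> \<beta> :: real^'n::finite^'n)$i$j = (if i = j then \<alpha> else \<beta>)"
  by (simp add: toeplitz_special_def)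

text \<open>Normalising the signs of the entries in the row of \<open>i\<^sub>0\<close> forces every off-diagonal
  entry to be \<open>\<beta>\<close>, because the sign of \<open>A\<^sub>i\<^sub>j\<close> is then dictated by the triangle
  \<open>i\<^sub>0, i, j\<close>.\<close>
lemma toeplitz_sign_conj_exists:
  fixes A :: "real^'n::finite^'n"
  assumes sym: "\<And>i j. A$j$i = A$i$j" and diag: "\<And>i. A$i$i = \<alpha>"
    and square: "\<And>i j. i \<noteq> j \<Longrightarrow> (A$i$j)\<^sup>2 = \<beta>\<^sup>2"
    and triangle: "\<And>i j k. distinct [i, j, k] \<Longrightarrow> A$i$j * A$j$k * A$k$i = \<beta>^3"
  shows "\<exists>t. (\<forall>i. t i * t i = 1) \<and> (\<chi> i j. t i * t j * A$i$j) = toeplitz_special \<alpha> \<beta>"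
proof (cases "\<beta> = 0")
  case True
  then have "A = toeplitz_special \<alpha> \<beta>"
    using diag square by (auto simp: vec_eq_iff)
  then show ?thesis by (intro exI[of _ "\<lambda>_. 1"]) (simp add: vec_eq_iff)
next
  case False
  fix i\<^sub>0 :: 'n
  define t where "t i = (if i = i\<^sub>0 then 1 else A$i\<^sub>0$i / \<beta>)" for i
  have t_square: "t i * t i = 1" for i
    using square[of i\<^sub>0 i] False by (simp add: t_def power2_eq_square)
  have "t i * t j * A$i$j = (if i = j then \<alpha> else \<beta>)" for i j
  proof (cases "i = j")
    case True
    then show ?thesis using t_square diag by simp
  next
    case ij: False
    have row: "A$i\<^sub>0$k * A$i\<^sub>0$k / \<beta> = \<beta>" if "k \<noteq> i\<^sub>0" for k
      using square[of i\<^sub>0 k] that False by (simp add: power2_eq_square field_simps)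
    show ?thesis
    proof (cases "i = i\<^sub>0 \<or> j = i\<^sub>0")
      case True
      then show ?thesis using ij row[of i] row[of j] sym[of i\<^sub>0 i] by (auto simp: t_def)
    next
      case False
      then have "A$i\<^sub>0$i * A$i$j * A$j$i\<^sub>0 = \<beta>^3"
        using ij by (intro triangle) auto
      then show ?thesis
        using False ij \<open>\<beta> \<noteq> 0\<close> sym[of i\<^sub>0 j] by (simp add: t_def power3_eq_cube field_simps)
    qed
  qed
  then show ?thesis using t_square by (intro exI[of _ t]) (simp add: vec_eq_iff)
qed

lemma associated_toeplitz_exists:
  fixes A :: "real^'n::finite^'n"
  assumes A: "associated_matrix a A" and card: "2 \<le> CARD('n)"
  shows "\<exists>\<alpha> \<beta>. associated_matrix a (toeplitz_special \<alpha> \<beta> :: real^'n^'n)"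
proof -
  obtain i\<^sub>0 j\<^sub>0 :: 'n where i\<^sub>0j\<^sub>0: "i\<^sub>0 \<noteq> j\<^sub>0"
    using obtain_distinct_pair[OF card] by blast
  obtain \<beta> where square: "\<And>i j. i \<noteq> j \<Longrightarrow> (A$i$j)\<^sup>2 = \<beta>\<^sup>2"
    and triangle: "\<And>i j k. distinct [i, j, k] \<Longrightarrow> A$i$j * A$j$k * A$k$i = \<beta>^3"
  proof (cases "\<exists>k. distinct [i\<^sub>0, j\<^sub>0, k]")
    case True
    then obtain k where k: "distinct [i\<^sub>0, j\<^sub>0, k]" ..
    define c where "c = A$i\<^sub>0$j\<^sub>0 * A$j\<^sub>0$k * A$k$i\<^sub>0"
    define \<beta> where "\<beta> = root 3 c"
    have cube: "\<beta>^3 = c" by (simp add: \<beta>_def odd_real_root_pow)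
    have "(\<beta>\<^sup>2)^3 = ((A$i\<^sub>0$j\<^sub>0)\<^sup>2)^3"
    proof -
      have "(\<beta>\<^sup>2)^3 = c\<^sup>2" by (simp flip: cube power_mult add: mult.commute)
      also have "\<dots> = (A$i\<^sub>0$j\<^sub>0)\<^sup>2 * (A$j\<^sub>0$k)\<^sup>2 * (A$k$i\<^sub>0)\<^sup>2"
        by (simp add: c_def power_mult_distrib)
      also have "\<dots> = ((A$i\<^sub>0$j\<^sub>0)\<^sup>2)^3"
      proof -
        have "j\<^sub>0 \<noteq> k" "k \<noteq> i\<^sub>0" using k by auto
        then show ?thesis
          using associated_matrix_offdiag_square_eq[OF A _ i\<^sub>0j\<^sub>0, of j\<^sub>0 k]
            associated_matrix_offdiag_square_eq[OF A _ i\<^sub>0j\<^sub>0, of k i\<^sub>0]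
          by (simp add: power3_eq_cube)
      qed
      finally show ?thesis .
    qed
    then have square: "\<beta>\<^sup>2 = (A$i\<^sub>0$j\<^sub>0)\<^sup>2" by (subst (asm) power_eq_iff_eq_base) simp_all
    show ?thesis
    proof (rule that)
      show "(A$i$j)\<^sup>2 = \<beta>\<^sup>2" if "i \<noteq> j" for i j
        using associated_matrix_offdiag_square_eq[OF A that i\<^sub>0j\<^sub>0] square by simp
      show "A$i$j * A$j$k * A$k$i = \<beta>^3" if "distinct [i, j, k]" for i j k
        using associated_matrix_triangle_eq[OF A that k] cube c_def by simp
    qed
  next
    case False
    then have two: "x = i\<^sub>0 \<or> x = j\<^sub>0" for x using i\<^sub>0j\<^sub>0 by auto
    show ?thesis
    proof (rule that)
      show "(A$i$j)\<^sup>2 = (A$i\<^sub>0$j\<^sub>0)\<^sup>2" if "i \<noteq> j" for i j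
        using associated_matrix_offdiag_square_eq[OF A that i\<^sub>0j\<^sub>0] .
      show "A$i$j * A$j$k * A$k$i = (A$i\<^sub>0$j\<^sub>0)^3" if "distinct [i, j, k]" for i j k
        using that two[of i] two[of j] two[of k] by auto
    qed
  qed
  obtain t where t: "\<And>i. t i * t i = 1"
    and "(\<chi> i j. t i * t j * A$i$j) = toeplitz_special (A$i\<^sub>0$i\<^sub>0) \<beta>"
    using toeplitz_sign_conj_exists[OF associated_matrix_symmetric[OF A]
        associated_matrix_diag_eq[OF A] square triangle] by blast
  then have "associated_matrix a (toeplitz_special (A$i\<^sub>0$i\<^sub>0) \<beta> :: real^'n^'n)"
    using associated_matrix_sign_conj[of a A t, OF A t] by simp
  then show ?thesis by blast
qed

lemma principal_minor_toeplitz_pair: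
  assumes "i \<noteq> j"
  shows "principal_minor (toeplitz_special \<alpha> \<beta> :: real^'n::finite^'n) {i, j} = \<alpha>\<^sup>2 - \<beta>\<^sup>2"
  using assms by (simp add: principal_minor_pair power2_eq_square)

lemma principal_minor_toeplitz_triple:
  assumes "distinct [i, j, k]"
  shows "principal_minor (toeplitz_special \<alpha> \<beta> :: real^'n::finite^'n) {i, j, k} =
    \<alpha>^3 - 3 * \<alpha> * \<beta>\<^sup>2 + 2 * \<beta>^3"
  using assms by (auto simp: principal_minor_triple power2_eq_square power3_eq_cube algebra_simps)

lemma associated_toeplitz_unique:
  fixes \<alpha> \<beta> \<alpha>' \<beta>' :: real
  assumes T: "associated_matrix a (toeplitz_special \<alpha> \<beta> :: real^'n::finite^'n)"
    and T': "associated_matrix a (toeplitz_special \<alpha>' \<beta>' :: real^'n^'n)"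
  shows "\<alpha>' = \<alpha>" and "2 \<le> CARD('n) \<Longrightarrow> \<beta>'\<^sup>2 = \<beta>\<^sup>2" and "3 \<le> CARD('n) \<Longrightarrow> \<beta>' = \<beta>"
proof -
  have minor: "principal_minor (toeplitz_special \<alpha>' \<beta>' :: real^'n^'n) S =
      principal_minor (toeplitz_special \<alpha> \<beta> :: real^'n^'n) S" for S
    using associated_matrix_principal_minor_eq[OF T' T] .
  show \<alpha>: "\<alpha>' = \<alpha>"
    using minor[of "{undefined}"] by (simp add: principal_minor_singleton)
  show \<beta>_square: "\<beta>'\<^sup>2 = \<beta>\<^sup>2" if card: "2 \<le> CARD('n)"
  proof -
    obtain i j :: 'n where "i \<noteq> j" using obtain_distinct_pair[OF card] by blast
    then show ?thesis
      using minor[of "{i, j}"] \<alpha> by (simp add: principal_minor_toeplitz_pair)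
  qed
  show "\<beta>' = \<beta>" if card: "3 \<le> CARD('n)"
  proof -
    obtain i j k :: 'n where "distinct [i, j, k]" using obtain_distinct_triple[OF card] by blast
    then have "\<beta>'^3 = \<beta>^3"
      using minor[of "{i, j, k}"] \<alpha> \<beta>_square card by (simp add: principal_minor_toeplitz_triple)
    then show ?thesis
      using odd_real_root_power_cancel[of 3 \<beta>] odd_real_root_power_cancel[of 3 \<beta>'] by simp
  qed
qed

lemma associated_toeplitz_neg:
  assumes card: "CARD('n::finite) = 2"
    and T: "associated_matrix a (toeplitz_special \<alpha> \<beta> :: real^'n^'n)"
  shows "associated_matrix a (toeplitz_special \<alpha> (- \<beta>) :: real^'n^'n)"
proof -
  obtain i\<^sub>0 j\<^sub>0 :: 'n where UNIV: "UNIV = {i\<^sub>0, j\<^sub>0}" and "i\<^sub>0 \<noteq> j\<^sub>0"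
    using card by (auto simp: card_2_iff)
  define t where "t i = (if i = i\<^sub>0 then 1 else - 1 :: real)" for i
  have t: "t i * t i = 1" for i by (simp add: t_def)
  have "(\<chi> i j. t i * t j * (toeplitz_special \<alpha> \<beta> :: real^'n^'n)$i$j) =
      toeplitz_special \<alpha> (- \<beta>)"
  proof -
    have "i \<in> {i\<^sub>0, j\<^sub>0}" "j \<in> {i\<^sub>0, j\<^sub>0}" for i j :: 'n using UNIV by auto
    then show ?thesis using \<open>i\<^sub>0 \<noteq> j\<^sub>0\<close> by (auto simp: vec_eq_iff t_def)
  qed
  then show ?thesis using associated_matrix_sign_conj[of a _ t, OF T t] by simp
qed

lemma associated_toeplitz_card_2_iff:
  assumes card: "CARD('n::finite) = 2"
    and T: "associated_matrix a (toeplitz_special \<alpha> \<beta> :: real^'n^'n)"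
  shows "associated_matrix a (toeplitz_special \<alpha>' \<beta>' :: real^'n^'n)
    \<longleftrightarrow> \<alpha>' = \<alpha> \<and> (\<beta>' = \<beta> \<or> \<beta>' = - \<beta>)"
proof
  assume T': "associated_matrix a (toeplitz_special \<alpha>' \<beta>' :: real^'n^'n)"
  show "\<alpha>' = \<alpha> \<and> (\<beta>' = \<beta> \<or> \<beta>' = - \<beta>)"
    using associated_toeplitz_unique(1,2)[OF T T'] card by (simp add: power2_eq_iff)
next
  assume "\<alpha>' = \<alpha> \<and> (\<beta>' = \<beta> \<or> \<beta>' = - \<beta>)"
  then show "associated_matrix a (toeplitz_special \<alpha>' \<beta>' :: real^'n^'n)"
    using T associated_toeplitz_neg[OF card T] by auto
qed

theorem proposition3p2:
  fixes a :: "nat \<Rightarrow> real"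
  assumes "CARD('n::finite) \<ge> 2"
    and "in_UN TYPE('n) a"
  shows "(\<exists>\<alpha> \<beta>. associated_matrix a (toeplitz_special \<alpha> \<beta> :: real^'n^'n))
     \<and> (\<forall>\<alpha> \<beta> \<alpha>' \<beta>'. associated_matrix a (toeplitz_special \<alpha> \<beta> :: real^'n^'n)
           \<and> associated_matrix a (toeplitz_special \<alpha>' \<beta>' :: real^'n^'n) \<longrightarrow> \<alpha>' = \<alpha>)
     \<and> (CARD('n) = 2 \<longrightarrow> (\<forall>\<alpha> \<beta>. associated_matrix a (toeplitz_special \<alpha> \<beta> :: real^'n^'n) \<longrightarrow>
           (\<forall>\<alpha>' \<beta>'. associated_matrix a (toeplitz_special \<alpha>' \<beta>' :: real^'n^'n)
               \<longleftrightarrow> \<alpha>' = \<alpha> \<and> (\<beta>' = \<beta> \<or> \<beta>' = - \<beta>))))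
     \<and> (CARD('n) \<ge> 3 \<longrightarrow> (\<forall>\<alpha> \<beta> \<alpha>' \<beta>'. associated_matrix a (toeplitz_special \<alpha> \<beta> :: real^'n^'n)
           \<and> associated_matrix a (toeplitz_special \<alpha>' \<beta>' :: real^'n^'n) \<longrightarrow> \<beta>' = \<beta>))"
proof -
  obtain A :: "real^'n^'n" where "associated_matrix a A"
    using assms(2) unfolding in_UN_def by blast
  then have "\<exists>\<alpha> \<beta>. associated_matrix a (toeplitz_special \<alpha> \<beta> :: real^'n^'n)"
    using associated_toeplitz_exists assms(1) by blast
  then show ?thesis
    using associated_toeplitz_unique(1,3) associated_toeplitz_card_2_iff[where 'n = 'n]
    by (intro conjI allI impI) auto
qed

end
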